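(* The free $\Gamma(Lev)$-algebra on one generator, $\Gamma(Lev,\mathbb F x)=\bigoplus_{n\ge1}(Lev(n)\otimes(\mathbb F x)^{\otimes n})^{\Sigma_n}$, is isomorphic as an $\mathbb F$-vector space to $\mathbb F[\mathrm{BHS}]$, the vector space spanned by the set of binary Huffman sequences.
   Context: $[n]=\{1,\dots,n\}$. $Lev$ is the linear operad spanned by the set operad $\mathscr L'$, where $\mathscr L'(n)$ ($n\ge1$) is the set of maps $h:[n]\to\mathbb N$ with $\sum_i2^{-h(i)}=1$, $\sigma\cdot h=h\circ\sigma^{-1}$, unit $1\mapsto0$ in $\mathscr L'(1)$, composition $\mu(h\otimes g_1\otimes\dots\otimes g_n)$ sending $m_1+\dots+m_{j-1}+t$ ($1\le t\le m_j$) to $h(j)+g_j(t)$; $Lev(0)=0$. $\Gamma(Lev)$ is Fresse's divided power monad $V\mapsto\bigoplus_n(Lev(n)\otimes V^{\otimes n})^{\Sigma_n}$, so $\Gamma(Lev,\mathbb F x)$ is the free $\Gamma(Lev)$-algebra on a one-dimensional space $\mathbb F x$. $\mathrm{BHS}=\bigsqcup_{n\ge1}\{u\in\mathbb N^{\mathbb N}:\sum_iu(i)=n,\ \sum_iu(i)/2^i=1\}$. *)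

theory Defs
  imports Complex_Main "HOL-Library.FuncSet" "HOL-Combinatorics.Permutations"
begin

definition Lprime :: "nat \<Rightarrow> (nat \<Rightarrow> nat) set" where
  "Lprime n = {h. h \<in> {1..n} \<rightarrow>\<^sub>E UNIV \<and> (\<Sum>i=1..n. (1/2::real) ^ (h i)) = 1}"

text \<open>Lev(n) = F[L'(n)]; (F x)^(x)n is one-dimensional (spanned by x^(x)n) with trivial
  Sigma_n-action, so an element is a finitely supported F-valued coefficient function
  on the basis {(n,h) | n >= 1, h in L'(n)} (coefficient of h (x) x^(x)n), and
  Sigma_n-invariance, for sigma.h = h o sigma^-1, means f(n, h o sigma) = f(n, h).\<close>
definition Gamma_Lev_x :: "(nat \<times> (nat \<Rightarrow> nat) \<Rightarrow> 'a::field) set" where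
  "Gamma_Lev_x = {f. finite {b. f b \<noteq> 0}
      \<and> (\<forall>n h. f (n, h) \<noteq> 0 \<longrightarrow> 1 \<le> n \<and> h \<in> Lprime n)
      \<and> (\<forall>n h \<sigma>. \<sigma> permutes {1..n} \<longrightarrow> f (n, h \<circ> \<sigma>) = f (n, h))}"

definition BHS :: "(nat \<Rightarrow> nat) set" where
  "BHS = {u. \<exists>n\<ge>1. finite {i. u i \<noteq> 0}
             \<and> (\<Sum>i\<in>{i. u i \<noteq> 0}. u i) = n
             \<and> (\<Sum>i\<in>{i. u i \<noteq> 0}. real (u i) / 2 ^ i) = 1}"

definition free_vs :: "'b set \<Rightarrow> ('b \<Rightarrow> 'a::field) set" where
  "free_vs S = {g. finite {s. g s \<noteq> 0} \<and> {s. g s \<noteq> 0} \<subseteq> S}"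

end

theory Submission
  imports Defs "HOL-Library.Multiset"
begin

text \<open>Since \<open>\<Sigma>\<^sub>n\<close> acts trivially on the line \<open>(F x)\<^sup>\<otimes>\<^sup>n\<close>, an element of
  \<open>\<Gamma>(Lev, F x)\<close> is a finitely supported function on the pairs \<open>(n, h)\<close> with \<open>h \<in> L'(n)\<close>
  that is constant on \<open>\<Sigma>\<^sub>n\<close>-orbits. Two maps \<open>h, h' : [n] \<rightarrow> \<nat>\<close> lie in the same orbit
  iff they take each value equally often, i.e. have the same counting function
  \<open>u(i) = #{j. h j = i}\<close>, and \<open>\<Sum>\<^sub>j 2^-h(j) = 1\<close> becomes \<open>\<Sum>\<^sub>i u(i) / 2^i = 1\<close>. Hence the
  orbits are indexed by the binary Huffman sequences, each orbit is finite, and the invariant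
  functions are exactly the finitely supported functions on \<open>BHS\<close>.\<close>

lemma sum_mset_eq_sum_count:
  fixes f :: "'b \<Rightarrow> 'a::comm_semiring_1"
  shows "(\<Sum>x\<in>#M. f x) = (\<Sum>x\<in>set_mset M. of_nat (count M x) * f x)"
proof (induction M)
  case empty
  then show ?case by simp
next
  case (add y M)
  let ?A = "insert y (set_mset M)"
  have "(\<Sum>x\<in>?A. of_nat (count (add_mset y M) x) * f x)
      = (\<Sum>x\<in>?A. of_nat (count M x) * f x + (if x = y then f x else 0))"
    by (intro sum.cong) (auto simp: distrib_right add.commute)
  also have "\<dots> = (\<Sum>x\<in>?A. of_nat (count M x) * f x) + f y"
    by (simp add: sum.distrib)
  also have "(\<Sum>x\<in>?A. of_nat (count M x) * f x) = (\<Sum>x\<in>set_mset M. of_nat (count M x) * f x)"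
    by (intro sum.mono_neutral_right) (auto simp: not_in_iff)
  finally show ?case using add by (simp add: add.commute)
qed

lemma BHS_iff_count:
  "u \<in> BHS \<longleftrightarrow> (\<exists>M. u = count M \<and> M \<noteq> {#} \<and> (\<Sum>i\<in>#M. (1/2::real) ^ i) = 1)"
proof -
  have supp: "{i. count M i \<noteq> 0} = set_mset M" for M :: "nat multiset"
    by (auto simp: count_eq_zero_iff)
  have size: "(\<Sum>i\<in>set_mset M. count M i) = size M" for M :: "nat multiset"
    by (simp add: size_multiset_overloaded_eq)
  have weight: "(\<Sum>i\<in>set_mset M. real (count M i) / 2 ^ i) = (\<Sum>i\<in>#M. (1/2::real) ^ i)" for M
  proof -
    have "real c * (1/2) ^ i = real c / 2 ^ i" for c i :: nat
      by (simp add: power_one_over)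
    then show ?thesis
      by (simp only: sum_mset_eq_sum_count)
  qed
  have "u \<in> BHS \<longleftrightarrow> (\<exists>M. u = count M \<and> 1 \<le> size M \<and> (\<Sum>i\<in>#M. (1/2::real) ^ i) = 1)"
  proof
    assume "u \<in> BHS"
    then obtain n where "1 \<le> n" and fin: "finite {i. u i \<noteq> 0}"
      and sizes: "(\<Sum>i | u i \<noteq> 0. u i) = n"
      and weights: "(\<Sum>i | u i \<noteq> 0. real (u i) / 2 ^ i) = 1"
      unfolding BHS_def by blast
    define M where "M = Abs_multiset u"
    have u: "u = count M"
      using fin by (simp add: M_def)
    have "{i. u i \<noteq> 0} = set_mset M"
      unfolding u by (rule supp)
    then have "size M = n" "(\<Sum>i\<in>#M. (1/2::real) ^ i) = 1"
      using sizes weights unfolding u by (simp_all add: size_multiset_overloaded_eq weight)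
    with u \<open>1 \<le> n\<close> show "\<exists>M. u = count M \<and> 1 \<le> size M \<and> (\<Sum>i\<in>#M. (1/2::real) ^ i) = 1"
      by blast
  next
    assume "\<exists>M. u = count M \<and> 1 \<le> size M \<and> (\<Sum>i\<in>#M. (1/2::real) ^ i) = 1"
    then obtain M where u: "u = count M" and "1 \<le> size M" "(\<Sum>i\<in>#M. (1/2::real) ^ i) = 1"
      by blast
    moreover have "{i. u i \<noteq> 0} = set_mset M"
      unfolding u by (rule supp)
    ultimately show "u \<in> BHS"
      unfolding BHS_def mem_Collect_eq
      by (intro exI[of _ "size M"]) (simp add: size_multiset_overloaded_eq weight)
  qed
  then show ?thesis
    by (simp add: Suc_le_eq nonempty_has_size)
qed

definition levels :: "nat \<Rightarrow> (nat \<Rightarrow> nat) \<Rightarrow> nat multiset" where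
  "levels n h = image_mset h (mset_set {1..n})"

lemma size_levels [simp]: "size (levels n h) = n"
  by (simp add: levels_def)

lemma sum_mset_levels: "(\<Sum>i\<in>#levels n h. f i) = (\<Sum>j=1..n. f (h j))"
  by (simp add: levels_def sum_unfold_sum_mset image_mset.compositionality o_def)

lemma Lprime_iff_levels:
  "h \<in> Lprime n \<longleftrightarrow> h \<in> {1..n} \<rightarrow>\<^sub>E UNIV \<and> (\<Sum>i\<in>#levels n h. (1/2::real) ^ i) = 1"
  by (simp add: Lprime_def sum_mset_levels)

lemma ex_levels_eq: "\<exists>h \<in> {1..size M} \<rightarrow>\<^sub>E UNIV. levels (size M) h = M"
proof -
  obtain xs where xs: "mset xs = M"
    using ex_mset by blast
  define h where "h j = (if j \<in> {1..size M} then xs ! (j - 1) else undefined)" for j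
  have "map h [1..<Suc (size M)] = xs"
    using xs by (intro nth_equalityI) (auto simp: h_def simp del: upt_Suc)
  then have "levels (size M) h = M"
    using xs by (metis levels_def atLeastLessThanSuc_atLeastAtMost mset_map mset_upt)
  moreover have "h \<in> {1..size M} \<rightarrow>\<^sub>E UNIV"
    by (auto simp: h_def)
  ultimately show ?thesis by blast
qed

lemma levels_comp_permutes: "\<sigma> permutes {1..n} \<Longrightarrow> levels n (h \<circ> \<sigma>) = levels n h"
  unfolding levels_def by (rule permutes_implies_image_mset_eq[symmetric]) auto

lemma levels_eq_imp_permutes:
  assumes "h \<in> {1..n} \<rightarrow>\<^sub>E UNIV" "h' \<in> {1..n} \<rightarrow>\<^sub>E UNIV" "levels n h = levels n h'"
  obtains \<sigma> where "\<sigma> permutes {1..n}" "h' = h \<circ> \<sigma>"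
proof -
  obtain \<sigma> where \<sigma>: "\<sigma> permutes {1..n}" "\<forall>x\<in>{1..n}. h' x = h (\<sigma> x)"
    using assms(3)[symmetric] unfolding levels_def
    by (rule image_mset_eq_implies_permutes[OF finite_atLeastAtMost]) blast
  have "h' x = h (\<sigma> x)" for x
  proof (cases "x \<in> {1..n}")
    case True
    with \<sigma>(2) show ?thesis by blast
  next
    case False
    then have "\<sigma> x = x"
      using \<sigma>(1) by (rule permutes_not_in[rotated])
    with False show ?thesis
      using PiE_arb[OF assms(1)] PiE_arb[OF assms(2)] by simp
  qed
  then have "h' = h \<circ> \<sigma>"
    by (simp add: fun_eq_iff)
  with \<sigma>(1) show thesis
    by (rule that)
qed

lemma comp_permutes_PiE_iff:
  assumes "\<sigma> permutes A"
  shows "h \<circ> \<sigma> \<in> A \<rightarrow>\<^sub>E B \<longleftrightarrow> h \<in> A \<rightarrow>\<^sub>E B"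
proof -
  have comp_in: "g \<circ> \<tau> \<in> A \<rightarrow>\<^sub>E B" if \<tau>: "\<tau> permutes A" and g: "g \<in> A \<rightarrow>\<^sub>E B" for g \<tau>
  proof
    fix x
    show "(g \<circ> \<tau>) x \<in> B" if "x \<in> A"
      using that PiE_mem[OF g] permutes_in_image[OF \<tau>] by simp
    show "(g \<circ> \<tau>) x = undefined" if "x \<notin> A"
      using that PiE_arb[OF g] permutes_not_in[OF \<tau>] by simp
  qed
  have "h = (h \<circ> \<sigma>) \<circ> inv \<sigma>"
    using assms by (simp add: comp_assoc permutes_inv_o(1))
  then show ?thesis
    using comp_in[OF assms] comp_in[OF permutes_inv[OF assms], of "h \<circ> \<sigma>"] by metis
qed

lemma Lprime_comp_permutes_iff: "\<sigma> permutes {1..n} \<Longrightarrow> h \<circ> \<sigma> \<in> Lprime n \<longleftrightarrow> h \<in> Lprime n"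
  by (simp add: Lprime_iff_levels levels_comp_permutes comp_permutes_PiE_iff)

definition free_vs_fibrewise_constant :: "('b \<Rightarrow> 'u) \<Rightarrow> 'b set \<Rightarrow> ('b \<Rightarrow> 'a::field) set" where
  "free_vs_fibrewise_constant \<kappa> D = {f \<in> free_vs D. \<forall>b\<in>D. \<forall>b'\<in>D. \<kappa> b = \<kappa> b' \<longrightarrow> f b = f b'}"

lemma bij_betw_fibrewise_constant_free_vs:
  assumes onto: "\<kappa> ` D = U"
    and finite_fibre: "\<And>u. u \<in> U \<Longrightarrow> finite {b \<in> D. \<kappa> b = u}"
  shows "bij_betw (\<lambda>f u. if u \<in> U then f (SOME b. b \<in> D \<and> \<kappa> b = u) else 0)
           (free_vs_fibrewise_constant \<kappa> D) (free_vs U :: ('u \<Rightarrow> 'a::field) set)"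
    (is "bij_betw ?\<phi> _ _")
  unfolding free_vs_fibrewise_constant_def
proof (rule bij_betw_byWitness[where f' = "\<lambda>g b. if b \<in> D then g (\<kappa> b) else 0"])
  let ?V = "{f \<in> free_vs D. \<forall>b\<in>D. \<forall>b'\<in>D. \<kappa> b = \<kappa> b' \<longrightarrow> f b = f b'} :: ('b \<Rightarrow> 'a) set"
  let ?rep = "\<lambda>u. SOME b. b \<in> D \<and> \<kappa> b = u"
  have rep: "?rep u \<in> D" "\<kappa> (?rep u) = u" if "u \<in> U" for u
    using someI_ex[of "\<lambda>b. b \<in> D \<and> \<kappa> b = u"] that onto by blast+
  show "\<forall>f\<in>?V. (\<lambda>b. if b \<in> D then ?\<phi> f (\<kappa> b) else 0) = f"
  proof (intro ballI ext)
    fix f b assume f: "f \<in> ?V"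
    show "(if b \<in> D then ?\<phi> f (\<kappa> b) else 0) = f b"
    proof (cases "b \<in> D")
      case True
      then have "\<kappa> b \<in> U"
        using onto by blast
      then have "f (?rep (\<kappa> b)) = f b"
        using f True rep[of "\<kappa> b"] by blast
      with True \<open>\<kappa> b \<in> U\<close> show ?thesis
        by simp
    next
      case False
      with f show ?thesis
        by (auto simp: free_vs_def)
    qed
  qed
  show "\<forall>g\<in>free_vs U. ?\<phi> (\<lambda>b. if b \<in> D then g (\<kappa> b) else 0) = g"
  proof (intro ballI ext)
    fix g :: "'u \<Rightarrow> 'a" and u assume g: "g \<in> free_vs U"
    show "?\<phi> (\<lambda>b. if b \<in> D then g (\<kappa> b) else 0) u = g u"
      using g rep[of u] by (auto simp: free_vs_def)
  qed
  show "?\<phi> ` ?V \<subseteq> free_vs U"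
  proof (rule image_subsetI)
    fix f assume f: "f \<in> ?V"
    have "{u. ?\<phi> f u \<noteq> 0} \<subseteq> \<kappa> ` {b. f b \<noteq> 0}"
    proof
      fix u assume "u \<in> {u. ?\<phi> f u \<noteq> 0}"
      then have "u \<in> U" "f (?rep u) \<noteq> 0"
        by (simp_all split: if_splits)
      then show "u \<in> \<kappa> ` {b. f b \<noteq> 0}"
        by (intro image_eqI[of _ _ "?rep u"]) (simp_all add: rep)
    qed
    moreover have "finite {b. f b \<noteq> 0}"
      using f by (simp add: free_vs_def)
    ultimately have "finite {u. ?\<phi> f u \<noteq> 0}"
      by (rule finite_subset[OF _ finite_imageI])
    moreover have "{u. ?\<phi> f u \<noteq> 0} \<subseteq> U"
      by auto
    ultimately show "?\<phi> f \<in> free_vs U"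
      unfolding free_vs_def by blast
  qed
  show "(\<lambda>g b. if b \<in> D then g (\<kappa> b) else 0) ` free_vs U \<subseteq> ?V"
  proof (rule image_subsetI)
    fix g :: "'u \<Rightarrow> 'a" assume g: "g \<in> free_vs U"
    let ?\<psi> = "\<lambda>b. if b \<in> D then g (\<kappa> b) else 0"
    have "{b. ?\<psi> b \<noteq> 0} \<subseteq> (\<Union>u\<in>{u. g u \<noteq> 0}. {b \<in> D. \<kappa> b = u})"
      by auto
    moreover have "finite (\<Union>u\<in>{u. g u \<noteq> 0}. {b \<in> D. \<kappa> b = u})"
      using g finite_fibre by (auto simp: free_vs_def)
    ultimately have "finite {b. ?\<psi> b \<noteq> 0}"
      by (rule finite_subset)
    moreover have "{b. ?\<psi> b \<noteq> 0} \<subseteq> D"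
      by auto
    ultimately show "?\<psi> \<in> ?V"
      unfolding free_vs_def by auto
  qed
qed

definition level_count :: "nat \<times> (nat \<Rightarrow> nat) \<Rightarrow> nat \<Rightarrow> nat" where
  "level_count = (\<lambda>(n, h). count (levels n h))"

lemma level_count_image: "level_count ` Sigma {1..} Lprime = BHS"
proof (intro equalityI subsetI)
  fix u assume "u \<in> level_count ` Sigma {1..} Lprime"
  then obtain n h where "1 \<le> n" "h \<in> Lprime n" "u = count (levels n h)"
    by (auto simp: level_count_def)
  then show "u \<in> BHS"
    unfolding BHS_iff_count Lprime_iff_levels
    by (intro exI[of _ "levels n h"]) (auto simp flip: size_eq_0_iff_empty)
next
  fix u assume "u \<in> BHS"
  then obtain M where M: "u = count M" "M \<noteq> {#}" "(\<Sum>i\<in>#M. (1/2::real) ^ i) = 1"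
    unfolding BHS_iff_count by blast
  obtain h where h: "h \<in> {1..size M} \<rightarrow>\<^sub>E UNIV" "levels (size M) h = M"
    using ex_levels_eq by blast
  have "(size M, h) \<in> Sigma {1..} Lprime"
    using M h by (simp add: Lprime_iff_levels Suc_le_eq nonempty_has_size)
  then show "u \<in> level_count ` Sigma {1..} Lprime"
    using M h by (force simp: level_count_def)
qed

lemma finite_level_count_fibre: "finite {b \<in> Sigma {1..} Lprime. level_count b = count M}"
proof (rule finite_subset)
  show "{b \<in> Sigma {1..} Lprime. level_count b = count M}
        \<subseteq> Pair (size M) ` ({1..size M} \<rightarrow>\<^sub>E set_mset M)"
  proof clarify
    fix n h assume "h \<in> Lprime n" "level_count (n, h) = count M"
    then have "h \<in> {1..n} \<rightarrow>\<^sub>E UNIV" "levels n h = M"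
      by (simp_all add: Lprime_iff_levels level_count_def count_inject)
    then show "(n, h) \<in> Pair (size M) ` ({1..size M} \<rightarrow>\<^sub>E set_mset M)"
      by (force simp: levels_def PiE_iff)
  qed
qed (simp add: finite_PiE)

lemma Gamma_Lev_x_eq_fibrewise_constant:
  "Gamma_Lev_x = free_vs_fibrewise_constant level_count (Sigma {1..} Lprime)"
  unfolding free_vs_fibrewise_constant_def
proof (intro equalityI subsetI CollectI conjI)
  fix f :: "nat \<times> (nat \<Rightarrow> nat) \<Rightarrow> 'a" assume f: "f \<in> Gamma_Lev_x"
  then show "f \<in> free_vs (Sigma {1..} Lprime)"
    by (auto simp: Gamma_Lev_x_def free_vs_def)
  show "\<forall>b\<in>Sigma {1..} Lprime. \<forall>b'\<in>Sigma {1..} Lprime. level_count b = level_count b' \<longrightarrow> f b = f b'"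
  proof clarsimp
    fix n h n' h' assume "h \<in> Lprime n" "h' \<in> Lprime n'" "level_count (n, h) = level_count (n', h')"
    then have n': "n' = n" and "levels n h = levels n h'"
      by (metis level_count_def case_prod_conv count_inject size_levels)+
    moreover have "h \<in> {1..n} \<rightarrow>\<^sub>E UNIV" "h' \<in> {1..n} \<rightarrow>\<^sub>E UNIV"
      using \<open>h \<in> Lprime n\<close> \<open>h' \<in> Lprime n'\<close> n' by (simp_all add: Lprime_def)
    ultimately obtain \<sigma> where "\<sigma> permutes {1..n}" "h' = h \<circ> \<sigma>"
      using levels_eq_imp_permutes by metis
    then show "f (n, h) = f (n', h')"
      using f n' by (simp add: Gamma_Lev_x_def)
  qed
next
  fix f :: "nat \<times> (nat \<Rightarrow> nat) \<Rightarrow> 'a"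
  assume f: "f \<in> {f. f \<in> free_vs (Sigma {1..} Lprime) \<and>
     (\<forall>b\<in>Sigma {1..} Lprime. \<forall>b'\<in>Sigma {1..} Lprime. level_count b = level_count b' \<longrightarrow> f b = f b')}"
  have supp: "{b. f b \<noteq> 0} \<subseteq> Sigma {1..} Lprime"
    using f by (simp add: free_vs_def)
  have "f (n, h \<circ> \<sigma>) = f (n, h)" if "\<sigma> permutes {1..n}" for n h \<sigma>
  proof (cases "1 \<le> n \<and> h \<in> Lprime n")
    case True
    then show ?thesis
      using f that by (simp add: Lprime_comp_permutes_iff level_count_def levels_comp_permutes)
  next
    case False
    then have "(n, h \<circ> \<sigma>) \<notin> Sigma {1..} Lprime" "(n, h) \<notin> Sigma {1..} Lprime"
      using Lprime_comp_permutes_iff[OF that] by auto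
    then have "f (n, h \<circ> \<sigma>) = 0" "f (n, h) = 0"
      using supp by auto
    then show ?thesis
      by simp
  qed
  then show "f \<in> Gamma_Lev_x"
    using f by (auto simp: Gamma_Lev_x_def free_vs_def)
qed

theorem corollary6p8:
  shows "\<exists>\<phi>. bij_betw \<phi> (Gamma_Lev_x :: (nat \<times> (nat \<Rightarrow> nat) \<Rightarrow> 'a::field) set)
                        (free_vs BHS :: ((nat \<Rightarrow> nat) \<Rightarrow> 'a) set)
        \<and> (\<forall>f\<in>Gamma_Lev_x. \<forall>g\<in>Gamma_Lev_x. \<forall>c::'a.
              \<phi> (\<lambda>b. c * f b + g b) = (\<lambda>u. c * \<phi> f u + \<phi> g u))"
proof -
  let ?\<phi> = "\<lambda>f u. if u \<in> BHS then f (SOME b. b \<in> Sigma {1..} Lprime \<and> level_count b = u) else 0"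
  have "bij_betw ?\<phi> (Gamma_Lev_x :: (nat \<times> (nat \<Rightarrow> nat) \<Rightarrow> 'a) set) (free_vs BHS)"
    unfolding Gamma_Lev_x_eq_fibrewise_constant
  proof (rule bij_betw_fibrewise_constant_free_vs[OF level_count_image])
    fix u assume "u \<in> BHS"
    then obtain M where "u = count M"
      by (auto simp: BHS_iff_count)
    then show "finite {b \<in> Sigma {1..} Lprime. level_count b = u}"
      using finite_level_count_fibre by simp
  qed
  moreover have "?\<phi> (\<lambda>b. c * f b + g b) = (\<lambda>u. c * ?\<phi> f u + ?\<phi> g u)" for f g :: "_ \<Rightarrow> 'a" and c
    by auto
  ultimately show ?thesis by blast
qed

end
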